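(* Let $n_0\ge1$ and $n_1=2n_0$. For $\ell\in\{0,1\}$ let $\mathbf{h}^\ell_k\in\mathbb{R}^{n_\ell}$, $k=0,\dots,n_\ell-1$, be the vectors with entries $(\mathbf{h}^\ell_k)_j=\cos\frac{2(j+\frac12)k\pi}{n_\ell}+\sin\frac{2(j+\frac12)k\pi}{n_\ell}$, $j=0,\dots,n_\ell-1$. Let $\mathbf{P}\in\mathbb{R}^{n_1\times n_0}$ be defined by $\mathbf{P}_{2j,j}=\mathbf{P}_{2j+1,j}=1$ for $j=0,\dots,n_0-1$ and all other entries $0$, and let $c_k:=\cos(k\pi/n_1)$. Then for all $k=0,\dots,n_0-1$, $\mathbf{P}\mathbf{h}^0_k=c_k\mathbf{h}^1_k-c_{n_0+k}\mathbf{h}^1_{n_0+k}$.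
   Context: Indices of vectors and matrices start at $0$. *)

theory Defs
  imports Complex_Main
begin

text \<open>Vectors in R^n are represented as functions nat \<Rightarrow> real, with entries indexed
  by 0..n-1; matrices as functions nat \<Rightarrow> nat \<Rightarrow> real (row, column).\<close>

definition hvec :: "nat \<Rightarrow> nat \<Rightarrow> nat \<Rightarrow> real" where
  "hvec n k j = cos (2 * (real j + 1/2) * real k * pi / real n)
              + sin (2 * (real j + 1/2) * real k * pi / real n)"

definition Pmat :: "nat \<Rightarrow> nat \<Rightarrow> nat \<Rightarrow> real" where
  "Pmat n0 i j = (if j < n0 \<and> (i = 2 * j \<or> i = 2 * j + 1) then 1 else 0)"

definition mat_vec :: "nat \<Rightarrow> (nat \<Rightarrow> nat \<Rightarrow> real) \<Rightarrow> (nat \<Rightarrow> real) \<Rightarrow> nat \<Rightarrow> real" where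
  "mat_vec m A x i = (\<Sum>j<m. A i j * x j)"

end

theory Submission
  imports Defs
begin

text \<open>Write \<open>cas x = cos x + sin x\<close>, \<open>\<theta> = k\<pi>/n\<^sub>1\<close> and \<open>a = (2i+1)\<theta>\<close>, so that
  \<open>(h\<^sup>1\<^sub>k)\<^sub>i = cas a\<close>. Entry \<open>i\<close> of \<open>P h\<^sup>0\<^sub>k\<close> is \<open>(h\<^sup>0\<^sub>k)\<^bsub>i div 2\<^esub> = cas (a + (-1)\<^sup>i \<theta>)\<close>, which the
  addition theorems expand to \<open>cos \<theta> cas a + (-1)\<^sup>i sin \<theta> (cos a - sin a)\<close>. Shifting the
  frequency by \<open>n\<^sub>0\<close> shifts the angle by \<open>(2i+1)\<pi>/2\<close>, which turns \<open>cas a\<close> into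
  \<open>(-1)\<^sup>i (cos a - sin a)\<close> and \<open>cos \<theta>\<close> into \<open>-sin \<theta>\<close>.\<close>

definition cas :: "real \<Rightarrow> real" where
  "cas x = cos x + sin x"

lemma cas_add: "cas (a + b) = cos b * cas a + sin b * (cos a - sin a)"
  unfolding cas_def by (simp add: cos_add sin_add algebra_simps)

lemma cas_add_sign:
  "cas (a + (-1) ^ m * b) = cos b * cas a + (-1) ^ m * sin b * (cos a - sin a)"
  using cas_add[of a "- b"] by (cases "even m") (simp_all add: cas_add)

lemma cas_add_npi_half_pi: "cas (a + real m * pi + pi / 2) = (-1) ^ m * (cos a - sin a)"
  unfolding cas_def by (simp add: cos_add sin_add cos_npi sin_npi algebra_simps)

lemma hvec_eq_cas: "hvec n k j = cas ((2 * real j + 1) * (real k * pi / real n))"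
proof -
  have "2 * (real j + 1 / 2) * real k * pi / real n = (2 * real j + 1) * (real k * pi / real n)"
    by (simp add: algebra_simps add_divide_distrib)
  then show ?thesis unfolding hvec_def cas_def by (simp only:)
qed

lemma mat_vec_Pmat:
  assumes "i < 2 * n"
  shows "mat_vec n (Pmat n) x i = x (i div 2)"
proof -
  have "mat_vec n (Pmat n) x i = (\<Sum>j<n. if j = i div 2 then x j else 0)"
    unfolding mat_vec_def Pmat_def by (rule sum.cong) auto
  also have "\<dots> = x (i div 2)"
    using assms by (simp add: less_mult_imp_div_less)
  finally show ?thesis .
qed

lemma double_odd_div_two: "2 * (2 * real (i div 2) + 1) = 2 * real i + 1 + (-1) ^ i"
  by (cases "even i") (auto elim!: evenE oddE)

lemma cos_frequency_shift:
  assumes "0 < n"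
  shows "cos (real (n + k) * pi / real (2 * n)) = - sin (real k * pi / real (2 * n))"
proof -
  have "real (n + k) * pi / real (2 * n) = real k * pi / real (2 * n) + pi / 2"
    using assms by (simp add: field_simps)
  then show ?thesis by (simp add: cos_add)
qed

lemma hvec_div_two:
  fixes n k i :: nat
  assumes "0 < n"
  defines "\<theta> \<equiv> real k * pi / real (2 * n)"
  shows "hvec n k (i div 2) = cos \<theta> * hvec (2 * n) k i + sin \<theta> * hvec (2 * n) (n + k) i"
proof -
  define a where "a = (2 * real i + 1) * \<theta>"
  have "hvec n k (i div 2) = cas (a + (-1) ^ i * \<theta>)"
  proof -
    have "(2 * real (i div 2) + 1) * (real k * pi / real n)
        = 2 * (2 * real (i div 2) + 1) * \<theta>"
      unfolding \<theta>_def using assms by (simp add: field_simps)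
    then show ?thesis
      unfolding hvec_eq_cas double_odd_div_two a_def by (simp add: algebra_simps)
  qed
  also have "\<dots> = cos \<theta> * cas a + sin \<theta> * ((-1) ^ i * (cos a - sin a))"
    using cas_add_sign by (simp add: mult_ac)
  also have "cas a = hvec (2 * n) k i"
    unfolding hvec_eq_cas a_def \<theta>_def ..
  also have "(-1) ^ i * (cos a - sin a) = hvec (2 * n) (n + k) i"
  proof -
    have "(2 * real i + 1) * (real (n + k) * pi / real (2 * n)) = a + real i * pi + pi / 2"
      unfolding a_def \<theta>_def using assms by (simp add: field_simps)
    then show ?thesis
      unfolding hvec_eq_cas by (simp add: cas_add_npi_half_pi)
  qed
  finally show ?thesis .
qed

theorem mainTheorem9:
  fixes n0 n1 :: nat
  assumes "n0 \<ge> 1" and "n1 = 2 * n0"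
  shows "\<forall>k < n0. \<forall>i < n1.
    mat_vec n0 (Pmat n0) (hvec n0 k) i =
      cos (real k * pi / real n1) * hvec n1 k i
      - cos (real (n0 + k) * pi / real n1) * hvec n1 (n0 + k) i"
proof (intro allI impI)
  fix k i assume "i < n1"
  have "0 < n0" using assms(1) by simp
  have "mat_vec n0 (Pmat n0) (hvec n0 k) i = hvec n0 k (i div 2)"
    using mat_vec_Pmat \<open>i < n1\<close> assms(2) by simp
  also have "\<dots> = cos (real k * pi / real n1) * hvec n1 k i
      + sin (real k * pi / real n1) * hvec n1 (n0 + k) i"
    unfolding assms(2) using hvec_div_two \<open>0 < n0\<close> by simp
  finally show "mat_vec n0 (Pmat n0) (hvec n0 k) i =
      cos (real k * pi / real n1) * hvec n1 k i
      - cos (real (n0 + k) * pi / real n1) * hvec n1 (n0 + k) i"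
    unfolding assms(2) using cos_frequency_shift \<open>0 < n0\<close> by simp
qed

end
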